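(* For $\mathbf{x}=(x_1,\dots,x_N)^{\mathrm T}\in\mathbb{R}^N$ define $$\ell_{\mathrm{ter}}(\mathbf{x})=\Big(\sum_{n=1}^N x_n^2\Big)\Big(\sum_{n=1}^N x_n^6\Big)-\Big(\sum_{n=1}^N x_n^4\Big)^2.$$ Then $\ell_{\mathrm{ter}}(\mathbf{x})\ge0$ for all $\mathbf{x}$, and $\ell_{\mathrm{ter}}(\mathbf{x})=0$ if and only if $\mathbf{x}\in\{-\alpha,0,+\alpha\}^N$ for some $\alpha\in\mathbb{R}$. Furthermore, $\ell_{\mathrm{ter}}$ has no spurious stationary points: $\nabla\ell_{\mathrm{ter}}(\mathbf{x})=\mathbf{0}$ holds only if $\mathbf{x}\in\{-\alpha,0,+\alpha\}^N$ for some $\alpha\in\mathbb{R}$.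
   Context: A spurious stationary point of a differentiable function $\ell$ whose zero set is $\mathcal{X}$ is a point $\mathbf{x}\notin\mathcal{X}$ with $\nabla\ell(\mathbf{x})=\mathbf{0}$. *)

theory Defs
  imports "HOL-Analysis.Analysis"
begin

definition ell_ter :: "real ^ 'n \<Rightarrow> real" where
  "ell_ter x = (\<Sum>n\<in>UNIV. (x $ n) ^ 2) * (\<Sum>n\<in>UNIV. (x $ n) ^ 6)
               - (\<Sum>n\<in>UNIV. (x $ n) ^ 4) ^ 2"

end

theory Submission
  imports Defs
begin

text \<open>Lagrange's identity for \<open>u\<^sub>n = x\<^sub>n\<close>, \<open>v\<^sub>n = x\<^sub>n\<^sup>3\<close> writes \<open>2 \<ell>(x)\<close> as the sum over all pairs
  \<open>(i, j)\<close> of \<open>(x\<^sub>i x\<^sub>j (x\<^sub>j\<^sup>2 - x\<^sub>i\<^sup>2))\<^sup>2\<close>; this gives nonnegativity, and \<open>\<ell>(x) = 0\<close> exactly when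
  all nonzero coordinates have the same modulus. Since \<open>\<ell>\<close> is homogeneous of degree 8,
  Euler's identity \<open>\<langle>\<nabla>\<ell>(x), x\<rangle> = 8 \<ell>(x)\<close> shows that every stationary point is a zero.\<close>

lemma lagrange_identity:
  fixes u v :: "'a \<Rightarrow> real"
  shows "2 * ((\<Sum>i\<in>A. (u i)\<^sup>2) * (\<Sum>i\<in>A. (v i)\<^sup>2) - (\<Sum>i\<in>A. u i * v i)\<^sup>2)
    = (\<Sum>i\<in>A. \<Sum>j\<in>A. (u i * v j - u j * v i)\<^sup>2)"
proof -
  have square: "(u i * v j - u j * v i)\<^sup>2
      = (u i)\<^sup>2 * (v j)\<^sup>2 + (u j)\<^sup>2 * (v i)\<^sup>2 - 2 * ((u i * v i) * (u j * v j))" for i j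
    by (simp add: power2_eq_square algebra_simps)
  have "(\<Sum>i\<in>A. \<Sum>j\<in>A. (u i)\<^sup>2 * (v j)\<^sup>2) = (\<Sum>i\<in>A. (u i)\<^sup>2) * (\<Sum>i\<in>A. (v i)\<^sup>2)"
    by (simp add: sum_product)
  moreover have "(\<Sum>i\<in>A. \<Sum>j\<in>A. (u j)\<^sup>2 * (v i)\<^sup>2) = (\<Sum>i\<in>A. (u i)\<^sup>2) * (\<Sum>i\<in>A. (v i)\<^sup>2)"
    by (subst sum.swap) (simp add: sum_product)
  moreover have "(\<Sum>i\<in>A. \<Sum>j\<in>A. 2 * ((u i * v i) * (u j * v j))) = 2 * (\<Sum>i\<in>A. u i * v i)\<^sup>2"
    by (simp add: power2_eq_square sum_product flip: sum_distrib_left)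
  ultimately show ?thesis
    by (simp add: square sum.distrib sum_subtractf)
qed

lemma ell_ter_lagrange:
  fixes x :: "real ^ 'n"
  shows "2 * ell_ter x = (\<Sum>i\<in>UNIV. \<Sum>j\<in>UNIV. (x$i * x$j * ((x$j)\<^sup>2 - (x$i)\<^sup>2))\<^sup>2)"
proof -
  have "x$i * (x$i)^3 = (x$i)^4" for i
    by (simp add: power_Suc[symmetric] del: power_Suc)
  then have "2 * ell_ter x = (\<Sum>i\<in>UNIV. \<Sum>j\<in>UNIV. (x$i * (x$j)^3 - x$j * (x$i)^3)\<^sup>2)"
    using lagrange_identity[where u = "\<lambda>i. x$i" and v = "\<lambda>i. (x$i)^3" and A = UNIV]
    by (simp add: ell_ter_def flip: power_mult power_add)
  also have "\<dots> = (\<Sum>i\<in>UNIV. \<Sum>j\<in>UNIV. (x$i * x$j * ((x$j)\<^sup>2 - (x$i)\<^sup>2))\<^sup>2)"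
    by (simp add: power2_eq_square power3_eq_cube algebra_simps)
  finally show ?thesis .
qed

lemma ell_ter_nonneg: "ell_ter x \<ge> 0"
proof -
  have "0 \<le> (\<Sum>i\<in>UNIV. \<Sum>j\<in>UNIV. (x$i * x$j * ((x$j)\<^sup>2 - (x$i)\<^sup>2))\<^sup>2)"
    by (intro sum_nonneg zero_le_power2)
  then show ?thesis
    using ell_ter_lagrange[of x] by simp
qed

lemma ternary_iff_pairwise:
  fixes x :: "'a \<Rightarrow> real"
  shows "(\<exists>\<alpha>. \<forall>n. x n \<in> {-\<alpha>, 0, \<alpha>}) \<longleftrightarrow> (\<forall>i j. x i = 0 \<or> x j = 0 \<or> \<bar>x i\<bar> = \<bar>x j\<bar>)"
proof
  assume "\<exists>\<alpha>. \<forall>n. x n \<in> {-\<alpha>, 0, \<alpha>}"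
  then obtain \<alpha> where "x n \<in> {-\<alpha>, 0, \<alpha>}" for n
    by blast
  then have "x n = 0 \<or> \<bar>x n\<bar> = \<bar>\<alpha>\<bar>" for n
    by (metis abs_minus_cancel insertE singletonD)
  then show "\<forall>i j. x i = 0 \<or> x j = 0 \<or> \<bar>x i\<bar> = \<bar>x j\<bar>"
    by metis
next
  assume pairwise: "\<forall>i j. x i = 0 \<or> x j = 0 \<or> \<bar>x i\<bar> = \<bar>x j\<bar>"
  show "\<exists>\<alpha>. \<forall>n. x n \<in> {-\<alpha>, 0, \<alpha>}"
  proof (cases "\<exists>k. x k \<noteq> 0")
    case True
    then obtain k where "x k \<noteq> 0" by blast
    then have "x n \<in> {-\<bar>x k\<bar>, 0, \<bar>x k\<bar>}" for n
      using pairwise[rule_format, of n k] by (auto simp: abs_eq_iff')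
    then show ?thesis by blast
  qed auto
qed

lemma ell_ter_eq_0_iff: "ell_ter x = 0 \<longleftrightarrow> (\<exists>\<alpha>::real. \<forall>n. x $ n \<in> {-\<alpha>, 0, \<alpha>})"
proof -
  have "ell_ter x = 0 \<longleftrightarrow> (\<Sum>i\<in>UNIV. \<Sum>j\<in>UNIV. (x$i * x$j * ((x$j)\<^sup>2 - (x$i)\<^sup>2))\<^sup>2) = 0"
    by (simp flip: ell_ter_lagrange)
  also have "\<dots> \<longleftrightarrow> (\<forall>i j. x$i * x$j * ((x$j)\<^sup>2 - (x$i)\<^sup>2) = 0)"
    by (simp add: sum_nonneg_eq_0_iff sum_nonneg)
  also have "\<dots> \<longleftrightarrow> (\<forall>i j. x$i = 0 \<or> x$j = 0 \<or> \<bar>x$i\<bar> = \<bar>x$j\<bar>)"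
    by (auto simp: power2_eq_iff abs_eq_iff)
  finally show ?thesis
    using ternary_iff_pairwise[of "\<lambda>n. x$n"] by simp
qed

lemma ell_ter_scaleR: "ell_ter (t *\<^sub>R x) = t^8 * ell_ter x"
  unfolding ell_ter_def
  by (simp add: power_mult_distrib algebra_simps power2_eq_square numeral_eq_Suc
      flip: sum_distrib_left)

lemma homogeneous_critical_value_eq_0:
  fixes f :: "'a::real_normed_vector \<Rightarrow> 'b::real_normed_vector"
  assumes critical: "(f has_derivative (\<lambda>h. 0)) (at x)"
    and homogeneous: "\<And>t. f (t *\<^sub>R x) = t^k *\<^sub>R f x" and "k > 0"
  shows "f x = 0"
proof -
  have "((\<lambda>t. t *\<^sub>R x) has_derivative (\<lambda>t. t *\<^sub>R x)) (at 1)"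
    by (auto intro!: derivative_eq_intros)
  from has_derivative_compose[OF this, of f] critical
  have "((\<lambda>t. t^k *\<^sub>R f x) has_derivative (\<lambda>h. 0)) (at 1)"
    by (simp add: homogeneous)
  moreover have "((\<lambda>t. t^k *\<^sub>R f x) has_derivative (\<lambda>h. (h * real k) *\<^sub>R f x)) (at 1)"
    by (auto intro!: derivative_eq_intros)
  ultimately have "(\<lambda>h. (h * real k) *\<^sub>R f x) = (\<lambda>h. 0)"
    using has_derivative_unique by blast
  then have "real k *\<^sub>R f x = 0"
    by (metis mult_1)
  with \<open>k > 0\<close> show ?thesis
    by simp
qed

theorem mainTheorem5:
  fixes x :: "real ^ 'n"
  shows "ell_ter x \<ge> 0
    \<and> (ell_ter x = 0 \<longleftrightarrow> (\<exists>\<alpha>::real. \<forall>n. x $ n \<in> {-\<alpha>, 0, \<alpha>}))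
    \<and> ((GDERIV ell_ter x :> 0) \<longrightarrow> (\<exists>\<alpha>::real. \<forall>n. x $ n \<in> {-\<alpha>, 0, \<alpha>}))"
proof (intro conjI impI)
  assume "GDERIV ell_ter x :> 0"
  then have "(ell_ter has_derivative (\<lambda>h. 0)) (at x)"
    by (simp add: gderiv_def)
  then have "ell_ter x = 0"
    by (rule homogeneous_critical_value_eq_0[where k = 8]) (simp_all add: ell_ter_scaleR)
  then show "\<exists>\<alpha>::real. \<forall>n. x $ n \<in> {-\<alpha>, 0, \<alpha>}"
    by (simp add: ell_ter_eq_0_iff)
qed (simp_all add: ell_ter_nonneg ell_ter_eq_0_iff)

end
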